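(* Let $i\geqslant 1$ and $d\geqslant 4$, $d\neq 6$, be integers. For $q=2,\dots,[d/2]$ set $$E_q=\binom{d+i+1}{i+1}-\binom{d-2q+i+1}{i+1}-\binom{q+i+1}{i+1}.$$ Then $\min\{E_q\mid q=2,\dots,[d/2]\}$ is attained at $q=2$.
   Context: $[x]$ denotes the integer part of $x$. *)

theory Defs
  imports Main
begin

definition E :: "nat \<Rightarrow> nat \<Rightarrow> nat \<Rightarrow> int" where
  "E d i q = int ((d + i + 1) choose (i + 1)) - int ((d - 2*q + i + 1) choose (i + 1))
             - int ((q + i + 1) choose (i + 1))"

end

theory Submission
  imports Defs
begin

text \<open>Write \<open>F u = (u + i + 1 choose i + 1)\<close>, so that \<open>E d i q = F d - F (d - 2q) - F q\<close>.
  By Pascal's rule \<open>F\<close> has increasing differences, hence moving the two arguments \<open>d - 2q\<close>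
  and \<open>q\<close> apart (one down to 2, the other up to their sum minus 2, which is at most \<open>d - 4\<close>)
  can only increase \<open>F (d - 2q) + F q\<close>. When \<open>d - 2q < 2\<close> this exchange is unavailable,
  and one instead bounds the two terms separately; this needs \<open>q \<le> d - 4\<close>, which fails
  exactly for \<open>d = 6, q = 3\<close>.\<close>

lemma binomial_increasing_differences:
  assumes "x \<le> y"
  shows "(x + j + Suc k choose Suc k) + (y + Suc k choose Suc k)
       \<le> (x + Suc k choose Suc k) + (y + j + Suc k choose Suc k)"
proof (induction j)
  case 0
  then show ?case by simp
next
  case (Suc j)
  have "(x + j + Suc k choose k) \<le> (y + j + Suc k choose k)"
    using assms by (intro binomial_right_mono) simp
  with Suc show ?case by simp
qed

lemma binomial_sum_spread:
  assumes "c \<le> x" and "c \<le> y"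
  shows "(x + k choose k) + (y + k choose k) \<le> (c + k choose k) + (x + y - c + k choose k)"
proof (cases k)
  case 0
  then show ?thesis by simp
next
  case (Suc k')
  have spread: "(c + j + k choose k) + (z + k choose k) \<le> (c + k choose k) + (z + j + k choose k)"
    if "c \<le> z" for z j
    using binomial_increasing_differences[OF that, of j k'] Suc by simp
  show ?thesis
  proof (cases "x \<le> y")
    case True
    with spread[of y "x - c"] assms show ?thesis by (simp add: add.commute)
  next
    case False
    with spread[of x "y - c"] assms show ?thesis by (simp add: add.commute)
  qed
qed

lemma binomial_pair_le_at_two:
  fixes d q k :: nat
  assumes "2 \<le> q" and "2 * q \<le> d" and "d \<noteq> 6"
  shows "(d - 2*q + k choose k) + (q + k choose k) \<le> (d - 4 + k choose k) + (2 + k choose k)"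
proof (cases "2 \<le> d - 2*q")
  case True
  have "(d - 2*q + k choose k) + (q + k choose k) \<le> (2 + k choose k) + (d - q - 2 + k choose k)"
    using binomial_sum_spread[OF True \<open>2 \<le> q\<close>, of k] assms by simp
  also have "\<dots> \<le> (2 + k choose k) + (d - 4 + k choose k)"
    using assms by (intro add_left_mono binomial_right_mono) simp
  finally show ?thesis by simp
next
  case False
  show ?thesis
  proof (cases "q = 2")
    case True
    then show ?thesis by simp
  next
    case False
    with \<open>\<not> 2 \<le> d - 2*q\<close> assms have "q \<le> d - 4" by simp
    then have "(q + k choose k) \<le> (d - 4 + k choose k)" by (simp add: binomial_right_mono)
    moreover have "(d - 2*q + k choose k) \<le> (2 + k choose k)"
      using \<open>\<not> 2 \<le> d - 2*q\<close> by (simp add: binomial_right_mono)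
    ultimately show ?thesis by simp
  qed
qed

theorem lemma1p1:
  fixes i d :: nat
  assumes "i \<ge> 1" and "d \<ge> 4" and "d \<noteq> 6"
  shows "E d i 2 = Min ((\<lambda>q. E d i q) ` {2..d div 2})"
proof (rule sym, rule Min_eqI)
  show "E d i 2 \<in> (\<lambda>q. E d i q) ` {2..d div 2}"
    using assms by auto
next
  fix e
  assume "e \<in> (\<lambda>q. E d i q) ` {2..d div 2}"
  then obtain q where q: "2 \<le> q" "2 * q \<le> d" and e: "e = E d i q"
    by auto
  from binomial_pair_le_at_two[OF q \<open>d \<noteq> 6\<close>, of "i + 1"] show "E d i 2 \<le> e"
    unfolding e E_def by (simp add: add.assoc)
qed simp

end
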